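(* An integral polynomial $u(t)\in\mathbb{Z}[t]$ is equal to the polynomial $u(\alpha)$ of some virtual string $\alpha$ if and only if $u(0)=u'(1)=0$.
   Context: A virtual string $\alpha$ of rank $m\ge 0$ consists of an oriented circle $S$ (the core circle) together with $2m$ distinct points of $S$ partitioned into $m$ ordered pairs $(a,b)$, called arrows; $a$ is the tail and $b$ the head of the arrow. For distinct $a,b\in S$, $ab$ denotes the arc of $S$ going from $a$ to $b$ in the positive direction. An arrow $f=(c,d)\neq e=(a,b)$ links $e$ positively if $c\in ab$, $d\in ba$, and negatively if $c\in ba$, $d\in ab$. Let $n(e)\in\mathbb{Z}$ be the number of arrows linking $e$ positively minus the number of arrows linking $e$ negatively. For $k\ge1$ set $u_k(\alpha)=\#\{e: n(e)=k\}-\#\{e:n(e)=-k\}$ and $u(\alpha)=\sum_{k\ge1}u_k(\alpha)t^k\in\mathbb{Z}[t]$. *)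

theory Defs
  imports "HOL-Computational_Algebra.Polynomial"
begin

text \<open>The core circle S is modelled as R/Z, points represented by reals in [0,1);
  the positive direction is the direction of increasing parameter.
  An arrow is an ordered pair (tail, head) of points.\<close>

definition circle_pt :: "real \<Rightarrow> bool" where
  "circle_pt x \<longleftrightarrow> 0 \<le> x \<and> x < 1"

definition in_arc :: "real \<Rightarrow> real \<Rightarrow> real \<Rightarrow> bool" where
  "in_arc a b c \<longleftrightarrow> c \<noteq> a \<and> c \<noteq> b \<and> frac (c - a) < frac (b - a)"

definition virtual_string :: "(real \<times> real) set \<Rightarrow> bool" where
  "virtual_string E \<longleftrightarrow> finite E \<and>
     (\<forall>e\<in>E. circle_pt (fst e) \<and> circle_pt (snd e) \<and> fst e \<noteq> snd e) \<and>
     (\<forall>e\<in>E. \<forall>f\<in>E. e \<noteq> f \<longrightarrow> {fst e, snd e} \<inter> {fst f, snd f} = {})"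

definition links_pos :: "real \<times> real \<Rightarrow> real \<times> real \<Rightarrow> bool" where
  "links_pos f e \<longleftrightarrow> in_arc (fst e) (snd e) (fst f) \<and> in_arc (snd e) (fst e) (snd f)"

definition links_neg :: "real \<times> real \<Rightarrow> real \<times> real \<Rightarrow> bool" where
  "links_neg f e \<longleftrightarrow> in_arc (snd e) (fst e) (fst f) \<and> in_arc (fst e) (snd e) (snd f)"

definition n_arrow :: "(real \<times> real) set \<Rightarrow> real \<times> real \<Rightarrow> int" where
  "n_arrow E e = int (card {f\<in>E. f \<noteq> e \<and> links_pos f e})
                 - int (card {f\<in>E. f \<noteq> e \<and> links_neg f e})"

definition u_k :: "(real \<times> real) set \<Rightarrow> nat \<Rightarrow> int" where
  "u_k E k = int (card {e\<in>E. n_arrow E e = int k}) - int (card {e\<in>E. n_arrow E e = - int k})"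

text \<open>u(alpha) = sum over k >= 1 of u_k t^k; since |n(e)| < card E, all u_k with
  k > card E vanish, so the sum may be truncated at card E.\<close>
definition u_poly :: "(real \<times> real) set \<Rightarrow> int poly" where
  "u_poly E = (\<Sum>k\<in>{1..card E}. monom (u_k E k) k)"

end

theory Submission
  imports Defs
begin

(* Each arrow e contributes sgn n(e) t^|n(e)| to u(alpha), so u(0) = 0 and u'(1) is the sum of
   all n(e), which vanishes because f links e negatively exactly when e links f positively.
   Conversely, placing two virtual strings on disjoint arcs of the circle adds their
   u-polynomials, and one arrow crossed by K nested arrows realises t^K - K t or its negative.
   Every p with p(0) = p'(1) = 0 is the sum of coeff p k * (t^k - k t) over k >= 1, hence
   realisable. *)

lemma frac_diff_circle_pt:
  assumes "circle_pt a" "circle_pt c"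
  shows "frac (c - a) = (if a \<le> c then c - a else c - a + 1)"
  using assms unfolding circle_pt_def by (auto simp: frac_unique_iff)

lemma in_arc_iff:
  assumes "circle_pt a" "circle_pt b" "circle_pt c"
  shows "in_arc a b c \<longleftrightarrow> (a < b \<and> a < c \<and> c < b) \<or> (b < a \<and> (a < c \<or> c < b))"
  using assms unfolding in_arc_def by (auto simp: frac_diff_circle_pt circle_pt_def)

definition on_circle :: "real \<times> real \<Rightarrow> bool" where
  "on_circle e \<longleftrightarrow> circle_pt (fst e) \<and> circle_pt (snd e)"

lemma virtual_string_finite: "virtual_string E \<Longrightarrow> finite E"
  unfolding virtual_string_def by blast

lemma virtual_string_on_circle: "virtual_string E \<Longrightarrow> e \<in> E \<Longrightarrow> on_circle e"
  unfolding virtual_string_def on_circle_def by blast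

lemma links_neg_iff_links_pos:
  assumes "on_circle e" "on_circle f"
  shows "links_neg f e \<longleftrightarrow> links_pos e f"
  using assms unfolding on_circle_def links_neg_def links_pos_def by (auto simp: in_arc_iff)

lemma unlinked_if_before:
  assumes "on_circle e" "on_circle f" "max (fst e) (snd e) < min (fst f) (snd f)"
  shows "\<not> links_pos f e \<and> \<not> links_neg f e" "\<not> links_pos e f \<and> \<not> links_neg e f"
  using assms unfolding on_circle_def links_neg_def links_pos_def by (auto simp: in_arc_iff)

lemma card_filter_eq_sum_of_bool:
  "finite A \<Longrightarrow> int (card {x\<in>A. P x}) = (\<Sum>x\<in>A. of_bool (P x))"
  by (simp add: Collect_conj_eq Int_def[symmetric] Int_commute)

lemma n_arrow_eq_sum:
  assumes "finite E"
  shows "n_arrow E e =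
           (\<Sum>f\<in>E. of_bool (f \<noteq> e \<and> links_pos f e) - of_bool (f \<noteq> e \<and> links_neg f e))"
  unfolding n_arrow_def sum_subtractf using assms by (simp add: card_filter_eq_sum_of_bool)

lemma abs_n_arrow_le_card:
  assumes "finite E"
  shows "\<bar>n_arrow E e\<bar> \<le> int (card E)"
proof -
  have "card {f\<in>E. f \<noteq> e \<and> links_pos f e} \<le> card E"
       "card {f\<in>E. f \<noteq> e \<and> links_neg f e} \<le> card E"
    using assms by (auto intro: card_mono)
  then show ?thesis unfolding n_arrow_def by linarith
qed

lemma n_arrow_Un_unlinked:
  assumes "\<And>f. f \<in> F \<Longrightarrow> \<not> links_pos f e \<and> \<not> links_neg f e"
  shows "n_arrow (E \<union> F) e = n_arrow E e"
proof -
  have "{f\<in>E \<union> F. f \<noteq> e \<and> links_pos f e} = {f\<in>E. f \<noteq> e \<and> links_pos f e}"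
       "{f\<in>E \<union> F. f \<noteq> e \<and> links_neg f e} = {f\<in>E. f \<noteq> e \<and> links_neg f e}"
    using assms by auto
  then show ?thesis unfolding n_arrow_def by simp
qed

lemma sum_n_arrow_eq_0:
  assumes "virtual_string E"
  shows "(\<Sum>e\<in>E. n_arrow E e) = 0"
proof -
  have fin: "finite E" using assms by (rule virtual_string_finite)
  have "(\<Sum>e\<in>E. \<Sum>f\<in>E. of_bool (f \<noteq> e \<and> links_neg f e))
      = (\<Sum>e\<in>E. \<Sum>f\<in>E. of_bool (e \<noteq> f \<and> links_pos e f) :: int)"
    using virtual_string_on_circle[OF assms]
    by (intro sum.cong refl) (auto simp: links_neg_iff_links_pos)
  also have "\<dots> = (\<Sum>e\<in>E. \<Sum>f\<in>E. of_bool (f \<noteq> e \<and> links_pos f e))"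
    by (rule sum.swap)
  finally show ?thesis
    unfolding n_arrow_eq_sum[OF fin] sum_subtractf by simp
qed

definition signed_monom :: "int \<Rightarrow> int poly" where
  "signed_monom z = monom (sgn z) (nat \<bar>z\<bar>)"

lemma coeff_signed_monom:
  "coeff (signed_monom z) j = (if j = 0 then 0 else of_bool (z = int j) - of_bool (z = - int j))"
  unfolding signed_monom_def coeff_monom by (auto simp: sgn_if)

lemma poly_signed_monom_0: "poly (signed_monom z) 0 = 0"
  by (simp add: poly_0_coeff_0 coeff_signed_monom)

lemma poly_pderiv_signed_monom_1: "poly (pderiv (signed_monom z)) 1 = z"
  unfolding signed_monom_def pderiv_monom poly_monom by (simp add: abs_mult_sgn)

lemma pderiv_sum: "pderiv (\<Sum>x\<in>A. f x) = (\<Sum>x\<in>A. pderiv (f x))"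
  using higher_pderiv_sum[of 1] by simp

lemma u_k_eq_sum:
  assumes "finite E"
  shows "u_k E k = (\<Sum>e\<in>E. of_bool (n_arrow E e = int k) - of_bool (n_arrow E e = - int k))"
  unfolding u_k_def sum_subtractf using assms by (simp add: card_filter_eq_sum_of_bool)

lemma u_k_eq_0_if_card_less:
  assumes "finite E" "card E < k"
  shows "u_k E k = 0"
proof -
  have "n_arrow E e \<noteq> int k \<and> n_arrow E e \<noteq> - int k" for e
    using abs_n_arrow_le_card[OF assms(1), of e] assms(2) by auto
  then show ?thesis by (simp add: u_k_eq_sum[OF assms(1)])
qed

lemma u_poly_eq_sum_signed_monom:
  assumes "finite E"
  shows "u_poly E = (\<Sum>e\<in>E. signed_monom (n_arrow E e))"
proof (rule poly_eqI)
  fix j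
  have "coeff (u_poly E) j = (if j \<in> {1..card E} then u_k E j else 0)"
    unfolding u_poly_def coeff_sum coeff_monom by simp
  also have "\<dots> = (if j = 0 then 0 else u_k E j)"
    using u_k_eq_0_if_card_less[OF assms, of j] by auto
  also have "\<dots> = coeff (\<Sum>e\<in>E. signed_monom (n_arrow E e)) j"
    by (simp add: coeff_sum coeff_signed_monom u_k_eq_sum[OF assms])
  finally show "coeff (u_poly E) j = coeff (\<Sum>e\<in>E. signed_monom (n_arrow E e)) j" .
qed

lemma poly_u_poly_0: "finite E \<Longrightarrow> poly (u_poly E) 0 = 0"
  by (simp add: u_poly_eq_sum_signed_monom poly_sum poly_signed_monom_0)

lemma poly_pderiv_u_poly_1: "finite E \<Longrightarrow> poly (pderiv (u_poly E)) 1 = (\<Sum>e\<in>E. n_arrow E e)"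
  by (simp add: u_poly_eq_sum_signed_monom pderiv_sum poly_sum poly_pderiv_signed_monom_1)

definition circle_order_embedding :: "(real \<Rightarrow> real) \<Rightarrow> bool" where
  "circle_order_embedding \<phi> \<longleftrightarrow>
     strict_mono_on (Collect circle_pt) \<phi> \<and> (\<forall>x. circle_pt x \<longrightarrow> circle_pt (\<phi> x))"

lemma circle_order_embeddingD:
  assumes "circle_order_embedding \<phi>"
  shows "inj_on \<phi> (Collect circle_pt)" "circle_pt x \<Longrightarrow> circle_pt (\<phi> x)"
  using assms unfolding circle_order_embedding_def by (auto intro: strict_mono_on_imp_inj_on)

lemma in_arc_image:
  assumes "circle_order_embedding \<phi>" "circle_pt a" "circle_pt b" "circle_pt c"
  shows "in_arc (\<phi> a) (\<phi> b) (\<phi> c) \<longleftrightarrow> in_arc a b c"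
  using assms strict_mono_on_less[of "Collect circle_pt" \<phi>]
  unfolding circle_order_embedding_def by (simp add: in_arc_iff)

lemma links_image:
  assumes "circle_order_embedding \<phi>" "on_circle e" "on_circle f"
  shows "links_pos (map_prod \<phi> \<phi> f) (map_prod \<phi> \<phi> e) \<longleftrightarrow> links_pos f e"
    and "links_neg (map_prod \<phi> \<phi> f) (map_prod \<phi> \<phi> e) \<longleftrightarrow> links_neg f e"
  using assms unfolding on_circle_def links_pos_def links_neg_def
  by (simp_all add: map_prod_def split_beta in_arc_image)

lemma inj_on_map_prod_circle:
  assumes "circle_order_embedding \<phi>" "\<And>e. e \<in> E \<Longrightarrow> on_circle e"
  shows "inj_on (map_prod \<phi> \<phi>) E"
proof -
  have "inj_on (map_prod \<phi> \<phi>) (Collect circle_pt \<times> Collect circle_pt)"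
    using circle_order_embeddingD(1)[OF assms(1)] by (intro map_prod_inj_on)
  moreover have "E \<subseteq> Collect circle_pt \<times> Collect circle_pt"
    using assms(2) unfolding on_circle_def by force
  ultimately show ?thesis by (rule inj_on_subset)
qed

lemma virtual_string_image:
  assumes "circle_order_embedding \<phi>" "virtual_string E"
  shows "virtual_string (map_prod \<phi> \<phi> ` E)"
proof -
  note inj = circle_order_embeddingD(1)[OF assms(1)]
  have "\<phi> ` A \<inter> \<phi> ` B = \<phi> ` (A \<inter> B)"
    if "A \<subseteq> Collect circle_pt" "B \<subseteq> Collect circle_pt" for A B
    using inj_on_image_Int[OF inj that] by (rule sym)
  with assms(2) show ?thesis
    unfolding virtual_string_def
    by (auto simp: circle_order_embeddingD(2)[OF assms(1)] inj_on_eq_iff[OF inj])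
qed

lemma n_arrow_image:
  assumes "circle_order_embedding \<phi>" "virtual_string E" "e \<in> E"
  shows "n_arrow (map_prod \<phi> \<phi> ` E) (map_prod \<phi> \<phi> e) = n_arrow E e"
proof -
  let ?h = "map_prod \<phi> \<phi>"
  have circ: "\<And>f. f \<in> E \<Longrightarrow> on_circle f" using assms(2) by (rule virtual_string_on_circle)
  have inj: "inj_on ?h E" using assms(1) circ by (rule inj_on_map_prod_circle)
  have "{g\<in>?h ` E. g \<noteq> ?h e \<and> links_pos g (?h e)} = ?h ` {f\<in>E. f \<noteq> e \<and> links_pos f e}"
       "{g\<in>?h ` E. g \<noteq> ?h e \<and> links_neg g (?h e)} = ?h ` {f\<in>E. f \<noteq> e \<and> links_neg f e}"
    using inj_on_eq_iff[OF inj _ assms(3)] links_image[OF assms(1) circ[OF assms(3)] circ]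
    by auto
  then show ?thesis
    unfolding n_arrow_def by (simp add: card_image inj_on_subset[OF inj])
qed

lemma u_poly_image:
  assumes "circle_order_embedding \<phi>" "virtual_string E"
  shows "u_poly (map_prod \<phi> \<phi> ` E) = u_poly E"
proof -
  have inj: "inj_on (map_prod \<phi> \<phi>) E"
    using assms(1) virtual_string_on_circle[OF assms(2)] by (rule inj_on_map_prod_circle)
  have "finite E" using assms(2) by (rule virtual_string_finite)
  then show ?thesis
    by (simp add: u_poly_eq_sum_signed_monom sum.reindex[OF inj] n_arrow_image[OF assms])
qed

definition arrows_precede :: "(real \<times> real) set \<Rightarrow> (real \<times> real) set \<Rightarrow> bool" where
  "arrows_precede E F \<longleftrightarrow> (\<forall>e\<in>E. \<forall>f\<in>F. max (fst e) (snd e) < min (fst f) (snd f))"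

lemma virtual_string_Un:
  assumes "virtual_string E" "virtual_string F" "arrows_precede E F"
  shows "virtual_string (E \<union> F)"
proof -
  have "{fst e, snd e} \<inter> {fst f, snd f} = {}" if "e \<in> E" "f \<in> F" for e f
    using assms(3) that unfolding arrows_precede_def by fastforce
  with assms(1,2) show ?thesis
    unfolding virtual_string_def by (metis Int_commute Un_iff finite_Un)
qed

lemma u_poly_Un:
  assumes "virtual_string E" "virtual_string F" "arrows_precede E F"
  shows "u_poly (E \<union> F) = u_poly E + u_poly F"
proof -
  have before: "max (fst e) (snd e) < min (fst f) (snd f)" if "e \<in> E" "f \<in> F" for e f
    using assms(3) that unfolding arrows_precede_def by blast
  have circ: "on_circle g" if "g \<in> E \<union> F" for g
    using that virtual_string_on_circle[OF assms(1)] virtual_string_on_circle[OF assms(2)] by blast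
  have "n_arrow (E \<union> F) e = n_arrow E e" if "e \<in> E" for e
    using unlinked_if_before(1)[OF circ circ before] that by (intro n_arrow_Un_unlinked) blast
  moreover have "n_arrow (E \<union> F) f = n_arrow F f" if "f \<in> F" for f
    using unlinked_if_before(2)[OF circ circ before] that
    by (subst Un_commute, intro n_arrow_Un_unlinked) blast
  moreover have "E \<inter> F = {}"
    using before by fastforce
  ultimately show ?thesis
    using virtual_string_finite[OF assms(1)] virtual_string_finite[OF assms(2)]
    by (simp add: u_poly_eq_sum_signed_monom sum.union_disjoint)
qed

definition realizable :: "int poly \<Rightarrow> bool" where
  "realizable p \<longleftrightarrow> (\<exists>E. virtual_string E \<and> u_poly E = p)"

lemma realizable_0: "realizable 0"
  unfolding realizable_def
  by (rule exI[of _ "{}"]) (simp add: virtual_string_def u_poly_def)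

lemma realizable_add:
  assumes "realizable p" "realizable q"
  shows "realizable (p + q)"
proof -
  obtain E F where E: "virtual_string E" "u_poly E = p" and F: "virtual_string F" "u_poly F = q"
    using assms unfolding realizable_def by blast
  define lower upper :: "real \<Rightarrow> real"
    where "lower x = x / 2" and "upper x = (x + 1) / 2" for x
  have emb: "circle_order_embedding lower" "circle_order_embedding upper"
    unfolding circle_order_embedding_def lower_def upper_def circle_pt_def
    by (auto intro: strict_mono_onI)
  let ?E = "map_prod lower lower ` E" and ?F = "map_prod upper upper ` F"
  have vs: "virtual_string ?E" "virtual_string ?F"
    using virtual_string_image emb E(1) F(1) by blast+
  have "arrows_precede ?E ?F"
    using virtual_string_on_circle[OF E(1)] virtual_string_on_circle[OF F(1)]
    unfolding arrows_precede_def lower_def upper_def by (fastforce simp: on_circle_def circle_pt_def)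
  then have "virtual_string (?E \<union> ?F)" "u_poly (?E \<union> ?F) = p + q"
    using virtual_string_Un[OF vs] u_poly_Un[OF vs] u_poly_image emb E F by auto
  then show ?thesis unfolding realizable_def by blast
qed

lemma realizable_sum:
  "(\<And>x. x \<in> A \<Longrightarrow> realizable (f x)) \<Longrightarrow> realizable (\<Sum>x\<in>A. f x)"
  by (induction A rule: infinite_finite_induct) (simp_all add: realizable_0 realizable_add)

lemma realizable_smult:
  assumes "realizable p" "realizable (- p)"
  shows "realizable (smult a p)"
proof -
  have "smult a p = (\<Sum>i<nat \<bar>a\<bar>. if 0 \<le> a then p else - p)"
    by (cases "0 \<le> a") (simp_all add: of_nat_poly)
  moreover have "realizable (\<Sum>i<nat \<bar>a\<bar>. if 0 \<le> a then p else - p)"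
    by (rule realizable_sum) (simp add: assms)
  ultimately show ?thesis by (simp only:)
qed

definition pow_minus_linear :: "nat \<Rightarrow> 'a::comm_ring_1 poly" where
  "pow_minus_linear k = monom 1 k - monom (of_nat k) 1"

lemma coeff_pow_minus_linear:
  "coeff (pow_minus_linear k) j = of_bool (k = j) - of_nat k * of_bool (j = 1)"
  unfolding pow_minus_linear_def by (auto simp: coeff_monom)

lemma poly_pderiv_at_1:
  fixes p :: "'a::{comm_semiring_1,semiring_no_zero_divisors} poly"
  shows "poly (pderiv p) 1 = (\<Sum>k\<in>{1..degree p}. of_nat k * coeff p k)"
proof -
  have "poly (pderiv p) 1 = poly (pderiv (\<Sum>k\<le>degree p. monom (coeff p k) k)) 1"
    by (simp only: poly_as_sum_of_monoms)
  also have "\<dots> = (\<Sum>k\<le>degree p. of_nat k * coeff p k)"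
    by (simp add: pderiv_sum poly_sum pderiv_monom poly_monom)
  also have "\<dots> = (\<Sum>k\<in>{1..degree p}. of_nat k * coeff p k)"
    by (rule sum.mono_neutral_right) (auto simp: Suc_le_eq)
  finally show ?thesis .
qed

lemma eq_sum_smult_pow_minus_linear:
  fixes p :: "'a::idom poly"
  assumes "poly p 0 = 0" "poly (pderiv p) 1 = 0"
  shows "p = (\<Sum>k\<in>{1..degree p}. smult (coeff p k) (pow_minus_linear k))"
proof (rule poly_eqI)
  fix j
  have "coeff (\<Sum>k\<in>{1..degree p}. smult (coeff p k) (pow_minus_linear k)) j
      = (\<Sum>k\<in>{1..degree p}. coeff p k * of_bool (k = j))
        - of_bool (j = 1) * (\<Sum>k\<in>{1..degree p}. of_nat k * coeff p k)"
    by (simp add: coeff_sum coeff_pow_minus_linear algebra_simps sum_subtractf sum_distrib_left)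
  also have "\<dots> = coeff p j"
    using assms coeff_eq_0[of p j]
    by (cases "j = 0 \<or> degree p < j") (auto simp: poly_pderiv_at_1 poly_0_coeff_0)
  finally show "coeff p j = coeff (\<Sum>k\<in>{1..degree p}. smult (coeff p k) (pow_minus_linear k)) j" ..
qed

definition grid_pt :: "nat \<Rightarrow> nat \<Rightarrow> real" where
  "grid_pt K i = real i / real (2 * K + 2)"

lemma grid_pt_less_iff [simp]: "grid_pt K i < grid_pt K j \<longleftrightarrow> i < j"
  unfolding grid_pt_def by (simp add: divide_less_cancel)

lemma grid_pt_eq_iff [simp]: "grid_pt K i = grid_pt K j \<longleftrightarrow> i = j"
  unfolding grid_pt_def by (simp add: divide_cancel_right)

lemma circle_pt_grid_pt [simp]: "circle_pt (grid_pt K i) \<longleftrightarrow> i < 2 * K + 2"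
  using of_nat_less_iff[of i "2 * K + 2", where ?'a = real]
  unfolding grid_pt_def circle_pt_def by (simp add: divide_less_eq)

lemma in_arc_grid_pt:
  assumes "a < 2 * K + 2" "b < 2 * K + 2" "c < 2 * K + 2"
  shows "in_arc (grid_pt K a) (grid_pt K b) (grid_pt K c) \<longleftrightarrow>
           (a < b \<and> a < c \<and> c < b) \<or> (b < a \<and> (a < c \<or> c < b))"
  using assms by (simp add: in_arc_iff)

(* The chords are nested, hence pairwise unlinked, and each crosses the axis,
   so n(axis) = +-K and n(chord) = -+1. *)
definition block_axis :: "nat \<Rightarrow> bool \<Rightarrow> real \<times> real" where
  "block_axis K s =
     (if s then (grid_pt K 0, grid_pt K (K + 1)) else (grid_pt K (K + 1), grid_pt K 0))"

definition block_chord :: "nat \<Rightarrow> nat \<Rightarrow> real \<times> real" where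
  "block_chord K i = (grid_pt K i, grid_pt K (2 * K + 2 - i))"

definition block :: "nat \<Rightarrow> bool \<Rightarrow> (real \<times> real) set" where
  "block K s = insert (block_axis K s) (block_chord K ` {1..K})"

lemma block_chord_links_axis:
  assumes "i \<in> {1..K}"
  shows "links_pos (block_chord K i) (block_axis K s) \<longleftrightarrow> s"
    and "links_neg (block_chord K i) (block_axis K s) \<longleftrightarrow> \<not> s"
    and "links_pos (block_axis K s) (block_chord K i) \<longleftrightarrow> \<not> s"
    and "links_neg (block_axis K s) (block_chord K i) \<longleftrightarrow> s"
  using assms
  by (auto simp: links_pos_def links_neg_def block_axis_def block_chord_def in_arc_grid_pt)

lemma block_chords_unlinked:
  assumes "i \<in> {1..K}" "j \<in> {1..K}" "i \<noteq> j"
  shows "\<not> links_pos (block_chord K j) (block_chord K i) \<and>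
         \<not> links_neg (block_chord K j) (block_chord K i)"
  using assms by (auto simp: links_pos_def links_neg_def block_chord_def in_arc_grid_pt)

lemma block_axis_notin_chords: "block_axis K s \<notin> block_chord K ` {1..K}"
  by (auto simp: block_axis_def block_chord_def)

lemma inj_on_block_chord: "inj_on (block_chord K) {1..K}"
  by (auto simp: inj_on_def block_chord_def)

lemma virtual_string_block: "virtual_string (block K s)"
  unfolding virtual_string_def block_def by (auto simp: block_axis_def block_chord_def)

lemma n_arrow_block_axis:
  "n_arrow (block K s) (block_axis K s) = (if s then int K else - int K)"
proof -
  have "{f\<in>block K s. f \<noteq> block_axis K s \<and> links_pos f (block_axis K s)}
          = (if s then block_chord K ` {1..K} else {})"
       "{f\<in>block K s. f \<noteq> block_axis K s \<and> links_neg f (block_axis K s)}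
          = (if s then {} else block_chord K ` {1..K})"
    unfolding block_def
    using block_chord_links_axis(1,2)[of _ K s] block_axis_notin_chords[of K s] by auto
  then show ?thesis
    unfolding n_arrow_def using card_image[OF inj_on_block_chord[of K]] by simp
qed

lemma n_arrow_block_chord:
  assumes "i \<in> {1..K}"
  shows "n_arrow (block K s) (block_chord K i) = (if s then -1 else 1)"
proof -
  have axis: "block_axis K s \<noteq> block_chord K i"
    using block_axis_notin_chords assms by blast
  have chords: "\<not> links_pos g (block_chord K i) \<and> \<not> links_neg g (block_chord K i)"
    if "g \<in> block_chord K ` {1..K}" "g \<noteq> block_chord K i" for g
    using that block_chords_unlinked[OF assms] by blast
  have "{f\<in>block K s. f \<noteq> block_chord K i \<and> links_pos f (block_chord K i)}
          = (if s then {} else {block_axis K s})"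
       "{f\<in>block K s. f \<noteq> block_chord K i \<and> links_neg f (block_chord K i)}
          = (if s then {block_axis K s} else {})"
    unfolding block_def using block_chord_links_axis(3,4)[OF assms, of s] axis chords
    by (auto simp del: atLeastAtMost_iff)
  then show ?thesis unfolding n_arrow_def by simp
qed

lemma sum_block:
  "(\<Sum>g\<in>block K s. f g) = f (block_axis K s) + (\<Sum>i\<in>{1..K}. f (block_chord K i))"
  using block_axis_notin_chords[of K s] sum.reindex[OF inj_on_block_chord[of K], of f]
  unfolding block_def by simp

lemma u_poly_block:
  assumes "1 \<le> K"
  shows "u_poly (block K s) = (if s then pow_minus_linear K else - pow_minus_linear K)"
proof -
  have "u_poly (block K s)
      = signed_monom (n_arrow (block K s) (block_axis K s))
        + (\<Sum>i\<in>{1..K}. signed_monom (n_arrow (block K s) (block_chord K i)))"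
    using virtual_string_finite[OF virtual_string_block]
    by (simp add: u_poly_eq_sum_signed_monom sum_block)
  also have "\<dots> = signed_monom (if s then int K else - int K)
                   + (\<Sum>i\<in>{1..K}. signed_monom (if s then -1 else 1))"
    by (simp add: n_arrow_block_axis n_arrow_block_chord)
  also have "\<dots> = (if s then pow_minus_linear K else - pow_minus_linear K)"
    using assms
    by (intro poly_eqI) (auto simp: coeff_signed_monom coeff_pow_minus_linear of_nat_poly)
  finally show ?thesis .
qed

lemma realizable_pow_minus_linear:
  assumes "1 \<le> K"
  shows "realizable (pow_minus_linear K)" "realizable (- pow_minus_linear K)"
  using u_poly_block[OF assms, of True] u_poly_block[OF assms, of False] virtual_string_block
  unfolding realizable_def by metis+

theorem theorem3p1:
  fixes p :: "int poly"
  shows "(\<exists>E. virtual_string E \<and> u_poly E = p) \<longleftrightarrow>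
         poly p 0 = 0 \<and> poly (pderiv p) 1 = 0"
proof
  assume "\<exists>E. virtual_string E \<and> u_poly E = p"
  then obtain E where E: "virtual_string E" "u_poly E = p" by blast
  from E(1) have "finite E" by (rule virtual_string_finite)
  with E show "poly p 0 = 0 \<and> poly (pderiv p) 1 = 0"
    using poly_u_poly_0 poly_pderiv_u_poly_1 sum_n_arrow_eq_0 by auto
next
  assume "poly p 0 = 0 \<and> poly (pderiv p) 1 = 0"
  then have "p = (\<Sum>k\<in>{1..degree p}. smult (coeff p k) (pow_minus_linear k))"
    by (intro eq_sum_smult_pow_minus_linear) auto
  moreover have "realizable (\<Sum>k\<in>{1..degree p}. smult (coeff p k) (pow_minus_linear k))"
    by (intro realizable_sum realizable_smult realizable_pow_minus_linear) auto
  ultimately show "\<exists>E. virtual_string E \<and> u_poly E = p"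
    unfolding realizable_def by simp
qed

end
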